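(* Let $\Gamma=(N,A,u)$ be a finite normal form game with $N=\{1,\dots,n\}$, $n\ge2$, in which every player has the same strategy set $X$, so $A=X^n$. The following are equivalent: (i) $\Gamma$ is fully symmetric, i.e. $u_i=u_{\pi(i)}\circ\pi$ for every $i\in N$ and every $\pi\in S_N$; (ii) $\Gamma$ is standard symmetric and weakly anonymous; (iii) for each $i\in N$ and $\pi\in S_N$, $u_{\pi(i)}=u_i\circ\pi^{-1}$; (iv) for each $i\in N$ and each transposition $\tau\in T_N$, $u_i=u_{\tau(i)}\circ\tau$; (v) for each $i\in N$ and each transposition $\tau\in T_N$, $u_i=u_{\tau(i)}\circ\tau^{-1}$.
   Context: A finite normal form game $\Gamma=(N,A,u)$ consists of players $N$, non-empty finite strategy sets $A_i$, profiles $A=\times_{i\in N}A_i$ and utilities $u_i:A\to\mathbb{R}$. For $\pi\in S_N$ and $s\in A$ write $\pi(s)=(s_{\pi^{-1}(i)})_{i\in N}$, and for a function $f:A\to\mathbb{R}$, $f\circ\pi$ denotes $s\mapsto f(\pi(s))$. $T_N$ is the set of transpositions in $S_N$. $\Gamma$ is standard symmetric if there is a transitive subgroup $H\le S_N$ such that $u_i=u_{\pi(i)}\circ\pi$ for all $i\in N$ and $\pi\in H$. $\Gamma$ is weakly anonymous if for each $i\in N$ and each permutation $\pi\in S_N$ fixing $i$, $u_i=u_i\circ\pi$. *)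

theory Defs
  imports Main "HOL-Combinatorics.Combinatorics"
begin

text \<open>Players are N = {1..n}; every player has strategy set X; a profile is an
  extensional function s : N -> X (undefined outside N), so A = X^n.
  Utilities u i : profile -> real for i in N.\<close>

definition players :: "nat \<Rightarrow> nat set" where
  "players n = {1..n}"

definition profiles :: "nat \<Rightarrow> 'x set \<Rightarrow> (nat \<Rightarrow> 'x) set" where
  "profiles n X = PiE (players n) (\<lambda>_. X)"

definition perm_act :: "(nat \<Rightarrow> nat) \<Rightarrow> (nat \<Rightarrow> 'x) \<Rightarrow> (nat \<Rightarrow> 'x)" where
  "perm_act p s = (\<lambda>i. s (inv p i))"

definition sym_perms :: "nat \<Rightarrow> (nat \<Rightarrow> nat) set" where
  "sym_perms n = {p. p permutes players n}"

definition transps :: "nat \<Rightarrow> (nat \<Rightarrow> nat) set" where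
  "transps n = {transpose a b | a b. a \<in> players n \<and> b \<in> players n \<and> a \<noteq> b}"

definition fully_symmetric :: "nat \<Rightarrow> 'x set \<Rightarrow> (nat \<Rightarrow> (nat \<Rightarrow> 'x) \<Rightarrow> real) \<Rightarrow> bool" where
  "fully_symmetric n X u \<longleftrightarrow>
     (\<forall>i\<in>players n. \<forall>p\<in>sym_perms n. \<forall>s\<in>profiles n X. u i s = u (p i) (perm_act p s))"

definition is_subgroup_SN :: "nat \<Rightarrow> (nat \<Rightarrow> nat) set \<Rightarrow> bool" where
  "is_subgroup_SN n H \<longleftrightarrow> H \<subseteq> sym_perms n \<and> id \<in> H \<and>
     (\<forall>p\<in>H. \<forall>q\<in>H. p \<circ> q \<in> H) \<and> (\<forall>p\<in>H. inv p \<in> H)"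

definition transitive_on_players :: "nat \<Rightarrow> (nat \<Rightarrow> nat) set \<Rightarrow> bool" where
  "transitive_on_players n H \<longleftrightarrow> (\<forall>i\<in>players n. \<forall>j\<in>players n. \<exists>p\<in>H. p i = j)"

definition standard_symmetric :: "nat \<Rightarrow> 'x set \<Rightarrow> (nat \<Rightarrow> (nat \<Rightarrow> 'x) \<Rightarrow> real) \<Rightarrow> bool" where
  "standard_symmetric n X u \<longleftrightarrow>
     (\<exists>H. is_subgroup_SN n H \<and> transitive_on_players n H \<and>
        (\<forall>i\<in>players n. \<forall>p\<in>H. \<forall>s\<in>profiles n X. u i s = u (p i) (perm_act p s)))"

definition weakly_anonymous :: "nat \<Rightarrow> 'x set \<Rightarrow> (nat \<Rightarrow> (nat \<Rightarrow> 'x) \<Rightarrow> real) \<Rightarrow> bool" where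
  "weakly_anonymous n X u \<longleftrightarrow>
     (\<forall>i\<in>players n. \<forall>p\<in>sym_perms n. p i = i \<longrightarrow>
        (\<forall>s\<in>profiles n X. u i s = u i (perm_act p s)))"

end

theory Submission
  imports Defs
begin

text \<open>Call a permutation p of the players a symmetry of the game if u i = u (p i) \<circ> p for
  every player i. Symmetries are closed under composition and inversion, so each condition
  says that some generating set of S_N consists of symmetries: S_N itself, the inverses,
  the transpositions, or a transitive subgroup together with the stabilisers of players.
  The last case works because every permutation is an element of the transitive subgroup
  composed with a permutation fixing a given player.\<close>

definition game_symmetry ::
    "nat \<Rightarrow> 'x set \<Rightarrow> (nat \<Rightarrow> (nat \<Rightarrow> 'x) \<Rightarrow> real) \<Rightarrow> (nat \<Rightarrow> nat) \<Rightarrow> bool" where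
  "game_symmetry n X u p \<longleftrightarrow>
     (\<forall>i\<in>players n. \<forall>s\<in>profiles n X. u i s = u (p i) (perm_act p s))"

lemma perm_act_in_profiles:
  assumes "p permutes players n" "s \<in> profiles n X"
  shows "perm_act p s \<in> profiles n X"
proof -
  have ip: "inv p permutes players n" using assms(1) by (rule permutes_inv)
  show ?thesis
    using assms(2) permutes_in_image[OF ip] permutes_not_in[OF ip]
    unfolding profiles_def perm_act_def PiE_def Pi_def extensional_def by auto
qed

lemma perm_act_id [simp]: "perm_act id s = s"
  unfolding perm_act_def by simp

lemma perm_act_comp:
  assumes "p permutes S" "q permutes S"
  shows "perm_act p (perm_act q s) = perm_act (p \<circ> q) s"
proof -
  have "inv (p \<circ> q) = inv q \<circ> inv p"
    using assms permutes_bij o_inv_distrib by blast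
  then show ?thesis unfolding perm_act_def by simp
qed

lemma perm_act_inv_cancel:
  assumes "p permutes S"
  shows "perm_act p (perm_act (inv p) s) = s"
  using perm_act_comp[OF assms permutes_inv[OF assms]] permutes_inv_o(1)[OF assms] by simp

lemma game_symmetry_id: "game_symmetry n X u id"
  unfolding game_symmetry_def by simp

lemma game_symmetry_comp:
  assumes "p permutes players n" "q permutes players n"
    and "game_symmetry n X u p" "game_symmetry n X u q"
  shows "game_symmetry n X u (p \<circ> q)"
  unfolding game_symmetry_def
proof (intro ballI)
  fix i s assume i: "i \<in> players n" and s: "s \<in> profiles n X"
  have "u i s = u (q i) (perm_act q s)"
    using assms(4) i s unfolding game_symmetry_def by blast
  also have "\<dots> = u (p (q i)) (perm_act p (perm_act q s))"
    using assms(3) permutes_in_image[OF assms(2)] i perm_act_in_profiles[OF assms(2) s]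
    unfolding game_symmetry_def by blast
  also have "\<dots> = u ((p \<circ> q) i) (perm_act (p \<circ> q) s)"
    by (simp add: perm_act_comp[OF assms(1,2)])
  finally show "u i s = u ((p \<circ> q) i) (perm_act (p \<circ> q) s)" .
qed

lemma game_symmetry_inv_iff:
  assumes "p permutes players n"
  shows "game_symmetry n X u (inv p) \<longleftrightarrow>
    (\<forall>i\<in>players n. \<forall>s\<in>profiles n X. u (p i) s = u i (perm_act (inv p) s))"
proof (intro iffI ballI)
  fix i s assume "game_symmetry n X u (inv p)" "i \<in> players n" "s \<in> profiles n X"
  then have "u (p i) s = u (inv p (p i)) (perm_act (inv p) s)"
    using permutes_in_image[OF assms] unfolding game_symmetry_def by blast
  then show "u (p i) s = u i (perm_act (inv p) s)"
    by (simp add: permutes_inverses(2)[OF assms])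
next
  assume sym: "\<forall>i\<in>players n. \<forall>s\<in>profiles n X. u (p i) s = u i (perm_act (inv p) s)"
  show "game_symmetry n X u (inv p)"
    unfolding game_symmetry_def
  proof (intro ballI)
    fix j s assume "j \<in> players n" "s \<in> profiles n X"
    then have "u (p (inv p j)) s = u (inv p j) (perm_act (inv p) s)"
      using sym permutes_in_image[OF permutes_inv[OF assms]] by blast
    then show "u j s = u (inv p j) (perm_act (inv p) s)"
      by (simp add: permutes_inverses(1)[OF assms])
  qed
qed

lemma game_symmetry_inv:
  assumes "p permutes players n" "game_symmetry n X u p"
  shows "game_symmetry n X u (inv p)"
  unfolding game_symmetry_inv_iff[OF assms(1)]
proof (intro ballI)
  fix i s assume i: "i \<in> players n" and s: "s \<in> profiles n X"
  have "u i (perm_act (inv p) s) = u (p i) (perm_act p (perm_act (inv p) s))"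
    using assms(2) i perm_act_in_profiles[OF permutes_inv[OF assms(1)] s]
    unfolding game_symmetry_def by blast
  then show "u (p i) s = u i (perm_act (inv p) s)"
    by (simp add: perm_act_inv_cancel[OF assms(1)])
qed

lemma game_symmetry_if_transpositions:
  assumes transp: "\<And>a b. a \<in> players n \<Longrightarrow> b \<in> players n \<Longrightarrow> a \<noteq> b \<Longrightarrow>
      game_symmetry n X u (transpose a b)"
    and p: "p permutes players n"
  shows "game_symmetry n X u p"
  using p finite_atLeastAtMost[of 1 n, folded players_def]
proof (induction rule: permutes_induct)
  case id
  show ?case by (rule game_symmetry_id)
next
  case (swap a b p)
  then show ?case
    using game_symmetry_comp[OF permutes_swap_id[OF swap(1,2)] swap(4) transp swap(5)]
    by blast
qed

lemma game_symmetry_if_transitive_and_stabilisers: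
  assumes H: "is_subgroup_SN n H" "transitive_on_players n H"
    and H_sym: "\<And>h. h \<in> H \<Longrightarrow> game_symmetry n X u h"
    and anon: "weakly_anonymous n X u"
    and p: "p permutes players n"
  shows "game_symmetry n X u p"
  unfolding game_symmetry_def
proof (intro ballI)
  fix i s assume i: "i \<in> players n" and s: "s \<in> profiles n X"
  obtain h where "h \<in> H" and hi: "h i = p i"
    using H(2) i permutes_in_image[OF p] unfolding transitive_on_players_def by blast
  then have h: "h permutes players n" "game_symmetry n X u h"
    using H(1) H_sym unfolding is_subgroup_SN_def sym_perms_def by auto
  define q where "q = inv h \<circ> p"
  have q: "q permutes players n"
    unfolding q_def using permutes_compose[OF p permutes_inv[OF h(1)]] .
  have "q i = i"
    unfolding q_def using hi permutes_inverses(2)[OF h(1)] by (metis comp_apply)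
  have hq: "h \<circ> q = p"
    unfolding q_def using permutes_inv_o(1)[OF h(1)] by (simp add: o_assoc)
  have "u i s = u i (perm_act q s)"
    using anon i q \<open>q i = i\<close> s unfolding weakly_anonymous_def sym_perms_def by blast
  also have "\<dots> = u (h i) (perm_act h (perm_act q s))"
    using h(2) i perm_act_in_profiles[OF q s] unfolding game_symmetry_def by blast
  also have "\<dots> = u (p i) (perm_act p s)"
    by (simp add: perm_act_comp[OF h(1) q] hq hi)
  finally show "u i s = u (p i) (perm_act p s)" .
qed

lemma sym_perms_subgroup: "is_subgroup_SN n (sym_perms n)"
  unfolding is_subgroup_SN_def sym_perms_def
  by (auto simp: permutes_id permutes_compose permutes_inv)

lemma sym_perms_transitive: "transitive_on_players n (sym_perms n)"
  unfolding transitive_on_players_def sym_perms_def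
  by (metis mem_Collect_eq permutes_swap_id transpose_apply_first)

lemma inv_transps: "t \<in> transps n \<Longrightarrow> inv t = t"
  unfolding transps_def by auto

lemma game_symmetries_iff_transpositions:
  "(\<forall>t\<in>transps n. game_symmetry n X u t) \<longleftrightarrow> (\<forall>p\<in>sym_perms n. game_symmetry n X u p)"
proof (intro iffI ballI)
  fix p assume trans_sym: "\<forall>t\<in>transps n. game_symmetry n X u t" and "p \<in> sym_perms n"
  have "game_symmetry n X u (transpose a b)"
    if "a \<in> players n" "b \<in> players n" "a \<noteq> b" for a b
    using trans_sym that unfolding transps_def by blast
  then show "game_symmetry n X u p"
    using game_symmetry_if_transpositions \<open>p \<in> sym_perms n\<close> unfolding sym_perms_def by blast
next
  fix t assume "\<forall>p\<in>sym_perms n. game_symmetry n X u p" and "t \<in> transps n"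
  then show "game_symmetry n X u t"
    unfolding transps_def sym_perms_def by (auto simp: permutes_swap_id)
qed

lemma fully_symmetric_iff_game_symmetries:
  "fully_symmetric n X u \<longleftrightarrow> (\<forall>p\<in>sym_perms n. game_symmetry n X u p)"
  unfolding fully_symmetric_def game_symmetry_def by blast

lemma game_symmetries_weakly_anonymous:
  assumes "\<forall>p\<in>sym_perms n. game_symmetry n X u p"
  shows "weakly_anonymous n X u"
  unfolding weakly_anonymous_def
proof (intro ballI impI)
  fix i p s assume "i \<in> players n" "p \<in> sym_perms n" "p i = i" "s \<in> profiles n X"
  then show "u i s = u i (perm_act p s)"
    using assms unfolding game_symmetry_def by metis
qed

lemma standard_symmetric_weakly_anonymous_iff_game_symmetries:
  "standard_symmetric n X u \<and> weakly_anonymous n X u \<longleftrightarrow>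
    (\<forall>p\<in>sym_perms n. game_symmetry n X u p)"
proof
  assume "standard_symmetric n X u \<and> weakly_anonymous n X u"
  then obtain H where H: "is_subgroup_SN n H" "transitive_on_players n H"
    and H_sym: "\<And>h. h \<in> H \<Longrightarrow> game_symmetry n X u h" and anon: "weakly_anonymous n X u"
    unfolding standard_symmetric_def game_symmetry_def by blast
  show "\<forall>p\<in>sym_perms n. game_symmetry n X u p"
    unfolding sym_perms_def
    using game_symmetry_if_transitive_and_stabilisers[OF H H_sym anon] by blast
next
  assume all_sym: "\<forall>p\<in>sym_perms n. game_symmetry n X u p"
  then have "standard_symmetric n X u"
    using sym_perms_subgroup sym_perms_transitive
    unfolding standard_symmetric_def game_symmetry_def by blast
  moreover note game_symmetries_weakly_anonymous[OF all_sym]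
  ultimately
  show "standard_symmetric n X u \<and> weakly_anonymous n X u" ..
qed

lemma game_symmetries_iff_inverses:
  "(\<forall>p\<in>sym_perms n. game_symmetry n X u (inv p)) \<longleftrightarrow>
    (\<forall>p\<in>sym_perms n. game_symmetry n X u p)"
proof (intro iffI ballI)
  fix p assume all_inv: "\<forall>p\<in>sym_perms n. game_symmetry n X u (inv p)" and "p \<in> sym_perms n"
  then have p: "p permutes players n" unfolding sym_perms_def by simp
  have "game_symmetry n X u (inv (inv p))"
    using all_inv permutes_inv[OF p] unfolding sym_perms_def by simp
  then show "game_symmetry n X u p" using permutes_inv_inv[OF p] by simp
next
  fix p assume "\<forall>p\<in>sym_perms n. game_symmetry n X u p" and "p \<in> sym_perms n"
  then show "game_symmetry n X u (inv p)"
    using game_symmetry_inv unfolding sym_perms_def by blast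
qed

theorem theorem3p15:
  fixes n :: nat and X :: "'x set" and u :: "nat \<Rightarrow> (nat \<Rightarrow> 'x) \<Rightarrow> real"
  assumes "n \<ge> 2" and "finite X" and "X \<noteq> {}"
  defines "c1 \<equiv> fully_symmetric n X u"
      and "c2 \<equiv> standard_symmetric n X u \<and> weakly_anonymous n X u"
      and "c3 \<equiv> (\<forall>i\<in>players n. \<forall>p\<in>sym_perms n. \<forall>s\<in>profiles n X.
                   u (p i) s = u i (perm_act (inv p) s))"
      and "c4 \<equiv> (\<forall>i\<in>players n. \<forall>t\<in>transps n. \<forall>s\<in>profiles n X.
                   u i s = u (t i) (perm_act t s))"
      and "c5 \<equiv> (\<forall>i\<in>players n. \<forall>t\<in>transps n. \<forall>s\<in>profiles n X.
                   u i s = u (t i) (perm_act (inv t) s))"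
  shows "(c1 \<longleftrightarrow> c2) \<and> (c1 \<longleftrightarrow> c3) \<and> (c1 \<longleftrightarrow> c4) \<and> (c1 \<longleftrightarrow> c5)"
proof -
  let ?all_sym = "\<forall>p\<in>sym_perms n. game_symmetry n X u p"
  have c1: "c1 \<longleftrightarrow> ?all_sym"
    unfolding c1_def by (rule fully_symmetric_iff_game_symmetries)
  have c2: "c2 \<longleftrightarrow> ?all_sym"
    unfolding c2_def by (rule standard_symmetric_weakly_anonymous_iff_game_symmetries)
  have "c3 \<longleftrightarrow> (\<forall>p\<in>sym_perms n. game_symmetry n X u (inv p))"
    unfolding c3_def sym_perms_def using game_symmetry_inv_iff by blast
  with game_symmetries_iff_inverses have c3: "c3 \<longleftrightarrow> ?all_sym" by blast
  have "c4 \<longleftrightarrow> (\<forall>t\<in>transps n. game_symmetry n X u t)"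
    unfolding c4_def game_symmetry_def by blast
  with game_symmetries_iff_transpositions have c4: "c4 \<longleftrightarrow> ?all_sym" by blast
  have "c5 \<longleftrightarrow> c4"
    unfolding c4_def c5_def by (simp add: inv_transps)
  then show ?thesis using c1 c2 c3 c4 by simp
qed

end
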